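(* Let $k\ge 1$, let $A_k$ be a $k$-atom and let $s$ be a seed of $A_k$. Then the tree $T_k$ is (isomorphic to) a subgraph of the path tree of $(A_k,s)$, and $T_k$ is equal to (isomorphic to) this path tree if and only if $A_k$ is isomorphic to $T_k$.
   Context: $k$-atoms are defined recursively: $K_1$ is the only $1$-atom (its vertex is its seed). A graph $H$ is a $(k+1)$-atom if its vertices can be partitioned into an independent set $I$ and a set inducing a $k$-atom $A_k$ such that each vertex of $A_k$ has exactly one neighbor in $I$ and each vertex of $I$ has at least one neighbor in $A_k$; a seed of $H$ is a seed of $A_k$ (i.e. a vertex that can serve as the initial vertex of the recursive construction). For each $k$ there is a unique $k$-atom that is a tree, denoted $T_k$ (it has $2^{k-1}$ vertices; $T_{k+1}$ is obtained from $T_k$ by attaching one new pendant vertex to each vertex). The path tree of $(G,u)$ is the rooted tree whose vertices are the paths in $G$ starting at $u$ (the root being the path of length $0$), two such paths being adjacent iff one is obtained from the other by appending one edge at its end. *)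

theory Defs
  imports Main
begin

type_synonym 'a graph = "'a set \<times> 'a set set"

abbreviation verts :: "'a graph \<Rightarrow> 'a set" where "verts G \<equiv> fst G"
abbreviation edges :: "'a graph \<Rightarrow> 'a set set" where "edges G \<equiv> snd G"

definition wf_graph :: "'a graph \<Rightarrow> bool" where
  "wf_graph G \<longleftrightarrow> finite (verts G) \<and>
     (\<forall>e\<in>edges G. \<exists>u v. e = {u, v} \<and> u \<noteq> v \<and> u \<in> verts G \<and> v \<in> verts G)"

definition adj :: "'a graph \<Rightarrow> 'a \<Rightarrow> 'a \<Rightarrow> bool" where
  "adj G u v \<longleftrightarrow> u \<noteq> v \<and> {u, v} \<in> edges G"

definition induced :: "'a graph \<Rightarrow> 'a set \<Rightarrow> 'a graph" where
  "induced G S = (S, {e \<in> edges G. e \<subseteq> S})"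

definition graph_iso :: "'a graph \<Rightarrow> 'b graph \<Rightarrow> bool" where
  "graph_iso G H \<longleftrightarrow> (\<exists>f. bij_betw f (verts G) (verts H) \<and>
     (\<forall>u\<in>verts G. \<forall>v\<in>verts G. {u, v} \<in> edges G \<longleftrightarrow> {f u, f v} \<in> edges H))"

definition subgraph_iso :: "'a graph \<Rightarrow> 'b graph \<Rightarrow> bool" where
  "subgraph_iso G H \<longleftrightarrow> (\<exists>f. inj_on f (verts G) \<and> f ` verts G \<subseteq> verts H \<and>
     (\<forall>u\<in>verts G. \<forall>v\<in>verts G. {u, v} \<in> edges G \<longrightarrow> {f u, f v} \<in> edges H))"

inductive atom :: "nat \<Rightarrow> 'a graph \<Rightarrow> 'a \<Rightarrow> bool" where
  base: "atom 1 ({s}, {}) s"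
| step: "\<lbrakk> wf_graph H; atom k A s; verts A \<subseteq> verts H; A = induced H (verts A);
           \<forall>x\<in>verts H - verts A. \<forall>y\<in>verts H - verts A. \<not> adj H x y;
           \<forall>x\<in>verts A. \<exists>!i. i \<in> verts H - verts A \<and> adj H x i;
           \<forall>i\<in>verts H - verts A. \<exists>x\<in>verts A. adj H x i \<rbrakk>
         \<Longrightarrow> atom (Suc k) H s"

text \<open>The tree T_k on vertex set {0..<2^(k-1)}: T_1 = K_1 and T_(k+1) is obtained
  from T_k by attaching a new pendant vertex v + 2^(k-1) to each vertex v.\<close>
fun T :: "nat \<Rightarrow> nat graph" where
  "T 0 = ({}, {})"
| "T (Suc 0) = ({0}, {})"
| "T (Suc (Suc n)) =
     (verts (T (Suc n)) \<union> (\<lambda>v. v + 2 ^ n) ` verts (T (Suc n)),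
      edges (T (Suc n)) \<union> {{v, v + 2 ^ n} | v. v \<in> verts (T (Suc n))})"

definition is_path :: "'a graph \<Rightarrow> 'a list \<Rightarrow> bool" where
  "is_path G p \<longleftrightarrow> p \<noteq> [] \<and> distinct p \<and> set p \<subseteq> verts G \<and>
     (\<forall>i. Suc i < length p \<longrightarrow> adj G (p ! i) (p ! Suc i))"

definition path_tree :: "'a graph \<Rightarrow> 'a \<Rightarrow> 'a list graph" where
  "path_tree G u =
     ({p. is_path G p \<and> hd p = u},
      {{p, p @ [v]} | p v. is_path G p \<and> hd p = u \<and> is_path G (p @ [v])})"

end

theory Submission
  imports Defs
begin

text \<open>Passing from a k-atom A to the
  (k+1)-atom H, every vertex x of A receives its unique neighbour mate x in I, so
  |H| = |A| + |I| \<le> 2|A|, with equality iff mate is injective, i.e. iff every vertex of I is a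
  leaf of H; in that case H arises from A exactly as T (k+1) arises from T k. Likewise every
  path p of A from s extends by the edge to mate (last p), so the path tree of H contains
  that of A with a pendant vertex attached to each node: T (k+1) embeds into it and it has
  at least twice as many vertices, again with equality iff mate is injective (if two vertices
  share their mate, some path passes through that mate and returns to A). Hence
  |A| \<le> 2^(k-1) \<le> |path_tree A s|, and either equality forces mate to have been injective at
  every step, which makes both A and its path tree isomorphic to T k.\<close>

section \<open>The trees T k\<close>

lemma verts_T: "k \<ge> 1 \<Longrightarrow> verts (T k) = {0..<2 ^ (k - 1)}"
proof (induction k rule: T.induct)
  case (3 m)
  have "{0..<(2::nat) ^ m} \<union> (\<lambda>v. v + 2 ^ m) ` {0..<2 ^ m} = {0..<2 ^ Suc m}"
  proof (rule set_eqI, rule iffI)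
    fix x :: nat assume "x \<in> {0..<2 ^ Suc m}"
    then show "x \<in> {0..<(2::nat) ^ m} \<union> (\<lambda>v. v + 2 ^ m) ` {0..<2 ^ m}"
      by (cases "x < 2 ^ m") (auto intro!: image_eqI[where x = "x - 2 ^ m"])
  qed auto
  then show ?case using 3 by (cases m) auto
qed auto

lemma card_verts_T: "k \<ge> 1 \<Longrightarrow> card (verts (T k)) = 2 ^ (k - 1)"
  by (simp add: verts_T)

lemma two_power_Suc_pred: "k \<ge> 1 \<Longrightarrow> (2::nat) ^ (Suc k - 1) = 2 * 2 ^ (k - 1)"
  by (cases k) auto

lemma verts_T_Suc: "k \<ge> 1 \<Longrightarrow> verts (T (Suc k)) = {0..<2 * 2 ^ (k - 1)}"
  using verts_T[of "Suc k"] by (cases k) auto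

lemma edges_T_bounded: "{u, v} \<in> edges (T k) \<Longrightarrow> u < 2 ^ (k - 1) \<and> v < 2 ^ (k - 1)"
proof (induction k arbitrary: u v rule: T.induct)
  case (3 m)
  have "(2::nat) ^ m < 2 ^ Suc m" by simp
  then have "u < 2 ^ Suc m \<and> v < 2 ^ Suc m" if "{u, v} \<in> edges (T (Suc m))" for u v
    using 3(1)[OF that] by (metis diff_Suc_1 less_trans)
  then show ?case using 3 verts_T[of "Suc m"] by (auto simp: doubleton_eq_iff)
qed auto

lemma edges_T_Suc:
  "k \<ge> 1 \<Longrightarrow> edges (T (Suc k)) = edges (T k) \<union> {{v, v + 2 ^ (k - 1)} | v. v < 2 ^ (k - 1)}"
  by (cases k) (auto simp: verts_T[of "Suc _", simplified])

context
  fixes k n :: nat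
  assumes k: "k \<ge> 1" and n: "n = 2 ^ (k - 1)"
begin

lemma edge_T_Suc_low: "u < n \<Longrightarrow> v < n \<Longrightarrow> {u, v} \<in> edges (T (Suc k)) \<longleftrightarrow> {u, v} \<in> edges (T k)"
  using edges_T_Suc[OF k] n by (auto simp: doubleton_eq_iff)

lemma edge_T_Suc_cross: "u < n \<Longrightarrow> v < n \<Longrightarrow> {u, v + n} \<in> edges (T (Suc k)) \<longleftrightarrow> u = v"
  using edges_T_Suc[OF k] edges_T_bounded[of u "v + n" k] n by (auto simp: doubleton_eq_iff)

lemma edge_T_Suc_high: "u < n \<Longrightarrow> v < n \<Longrightarrow> {u + n, v + n} \<notin> edges (T (Suc k))"
  using edges_T_Suc[OF k] edges_T_bounded[of "u + n" "v + n" k] n by (auto simp: doubleton_eq_iff)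

end

lemma edges_T_Suc_cases [consumes 3, case_names old pendant_up pendant_down]:
  assumes "k \<ge> 1" "n = 2 ^ (k - 1)" "{u, v} \<in> edges (T (Suc k))"
  obtains "u < n" "v < n" "{u, v} \<in> edges (T k)" | "u < n" "v = u + n" | "v < n" "u = v + n"
  using assms edges_T_Suc edges_T_bounded[of u v k] by (auto simp: doubleton_eq_iff)

section \<open>Isomorphisms onto pendant extensions\<close>

lemma below_double_cases:
  fixes u n :: nat
  assumes "u < 2 * n"
  obtains "u < n" | v where "v < n" "u = v + n"
  using assms by (metis add.commute le_add_diff_inverse mult_2 nat_add_left_cancel_less not_less)

definition pendant_map :: "nat \<Rightarrow> (nat \<Rightarrow> 'b) \<Rightarrow> ('b \<Rightarrow> 'b) \<Rightarrow> nat \<Rightarrow> 'b" where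
  "pendant_map n g e v = (if v < n then g v else e (g (v - n)))"

lemma pendant_map_low [simp]: "v < n \<Longrightarrow> pendant_map n g e v = g v"
  by (simp add: pendant_map_def)

lemma pendant_map_high [simp]: "pendant_map n g e (v + n) = e (g v)"
  by (simp add: pendant_map_def)

lemma image_pendant_map: "pendant_map n g e ` {0..<2 * n} = g ` {0..<n} \<union> e ` g ` {0..<n}"
proof (rule set_eqI, rule iffI)
  fix y assume "y \<in> pendant_map n g e ` {0..<2 * n}"
  then obtain u where "u < 2 * n" "y = pendant_map n g e u" by auto
  then show "y \<in> g ` {0..<n} \<union> e ` g ` {0..<n}"
    by (elim below_double_cases) auto
next
  fix y assume "y \<in> g ` {0..<n} \<union> e ` g ` {0..<n}"
  then consider v where "v < n" "y = pendant_map n g e v" | v where "v < n" "y = pendant_map n g e (v + n)"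
    by auto
  then show "y \<in> pendant_map n g e ` {0..<2 * n}"
    by cases (rule image_eqI, assumption, simp)+
qed

lemma inj_on_pendant_map:
  assumes g: "inj_on g {0..<n}" "g ` {0..<n} \<subseteq> Y" and e: "inj_on e Y" "\<forall>y\<in>Y. e y \<notin> Y"
  shows "inj_on (pendant_map n g e) {0..<2 * n}"
proof (rule inj_onI)
  fix u v assume "u \<in> {0..<2 * n}" "v \<in> {0..<2 * n}"
    and eq: "pendant_map n g e u = pendant_map n g e v"
  have gY: "g w \<in> Y" if "w < n" for w using g(2) that by auto
  from \<open>u \<in> {0..<2 * n}\<close> \<open>v \<in> {0..<2 * n}\<close> have "u < 2 * n" "v < 2 * n" by auto
  then show "u = v"
  proof (elim below_double_cases)
    assume "u < n" "v < n"
    then show "u = v" using eq g(1) by (simp add: inj_on_def)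
  next
    fix b assume "u < n" "b < n" "v = b + n"
    then show "u = v" using eq gY e(2) by force
  next
    fix a assume "a < n" "u = a + n" "v < n"
    then show "u = v" using eq gY e(2) by force
  next
    fix a b assume "a < n" "u = a + n" "b < n" "v = b + n"
    then have "g a = g b" using eq gY e(1) by (simp add: inj_on_def)
    then show "u = v" using \<open>a < n\<close> \<open>b < n\<close> \<open>u = a + n\<close> \<open>v = b + n\<close> g(1) by (simp add: inj_on_def)
  qed
qed

lemma graph_iso_sym: "graph_iso G H \<Longrightarrow> graph_iso H G"
proof -
  assume "graph_iso G H"
  then obtain f where f: "bij_betw f (verts G) (verts H)"
    and e: "\<forall>u\<in>verts G. \<forall>v\<in>verts G. {u, v} \<in> edges G \<longleftrightarrow> {f u, f v} \<in> edges H"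
    unfolding graph_iso_def by blast
  let ?g = "inv_into (verts G) f"
  have g: "bij_betw ?g (verts H) (verts G)"
    using f by (rule bij_betw_inv_into)
  have "{u, v} \<in> edges H \<longleftrightarrow> {?g u, ?g v} \<in> edges G" if "u \<in> verts H" "v \<in> verts H" for u v
  proof -
    have "f (?g u) = u" "f (?g v) = v"
      using f that by (auto simp: bij_betw_inv_into_right)
    moreover have "?g u \<in> verts G" "?g v \<in> verts G"
      using g that by (auto simp: bij_betw_def)
    ultimately show ?thesis using e by metis
  qed
  then show "graph_iso H G"
    unfolding graph_iso_def using g by blast
qed

lemma graph_iso_card_verts: "graph_iso G H \<Longrightarrow> card (verts G) = card (verts H)"
  unfolding graph_iso_def by (metis bij_betw_same_card)

lemma graph_iso_singleton: "graph_iso ({a}, {}) ({b}, {})"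
  unfolding graph_iso_def by (intro exI[of _ "\<lambda>_. b"]) (auto simp: bij_betw_def)

lemma subgraph_iso_if_graph_iso: "graph_iso G H \<Longrightarrow> subgraph_iso G H"
  unfolding graph_iso_def subgraph_iso_def by (auto simp: bij_betw_def)

lemma subgraph_iso_T_Suc:
  fixes B X :: "'b graph"
  assumes k: "k \<ge> 1" and emb: "subgraph_iso (T k) B"
    and sub: "verts B \<subseteq> verts X" "edges B \<subseteq> edges X"
    and e: "inj_on e (verts B)" "\<forall>y\<in>verts B. e y \<in> verts X - verts B"
    and pendant: "\<forall>y\<in>verts B. {y, e y} \<in> edges X"
  shows "subgraph_iso (T (Suc k)) X"
proof -
  define n :: nat where "n = 2 ^ (k - 1)"
  obtain f where f: "inj_on f {0..<n}" "f ` {0..<n} \<subseteq> verts B"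
    and f_edges: "\<forall>u<n. \<forall>v<n. {u, v} \<in> edges (T k) \<longrightarrow> {f u, f v} \<in> edges B"
    using emb verts_T[OF k] unfolding subgraph_iso_def n_def by auto
  let ?F = "pendant_map n f e"
  have "inj_on ?F (verts (T (Suc k)))"
    using inj_on_pendant_map[OF f e(1)] e(2) verts_T_Suc[OF k] n_def by auto
  moreover have "?F ` verts (T (Suc k)) \<subseteq> verts X"
    using image_pendant_map[of n f e] verts_T_Suc[OF k] f(2) sub(1) e(2) n_def by auto
  moreover have "{?F u, ?F v} \<in> edges X" if "{u, v} \<in> edges (T (Suc k))" for u v
    using k n_def that
  proof (cases rule: edges_T_Suc_cases)
    case old
    then show ?thesis using f_edges sub(2) by auto
  next
    case pendant_up
    then show ?thesis using pendant f(2) by (auto simp: image_subset_iff)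
  next
    case pendant_down
    then show ?thesis using pendant f(2) by (auto simp: image_subset_iff insert_commute)
  qed
  ultimately show ?thesis unfolding subgraph_iso_def by blast
qed

lemma graph_iso_T_Suc:
  fixes B X :: "'b graph"
  assumes k: "k \<ge> 1" and iso: "graph_iso (T k) B"
    and verts_X: "verts X = verts B \<union> e ` verts B"
    and edges_B: "\<forall>y\<in>verts B. \<forall>z\<in>verts B. {y, z} \<in> edges X \<longleftrightarrow> {y, z} \<in> edges B"
    and e: "inj_on e (verts B)" "\<forall>y\<in>verts B. e y \<notin> verts B"
    and pendant: "\<forall>y\<in>verts B. \<forall>z\<in>verts B. {y, e z} \<in> edges X \<longleftrightarrow> z = y"
    and independent: "\<forall>y\<in>verts B. \<forall>z\<in>verts B. {e y, e z} \<notin> edges X"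
  shows "graph_iso (T (Suc k)) X"
proof -
  define n :: nat where "n = 2 ^ (k - 1)"
  obtain g where g: "bij_betw g {0..<n} (verts B)"
    and g_edges: "\<forall>u<n. \<forall>v<n. {u, v} \<in> edges (T k) \<longleftrightarrow> {g u, g v} \<in> edges B"
    using iso verts_T[OF k] unfolding graph_iso_def n_def by auto
  have gB: "g u \<in> verts B" if "u < n" for u
    using g that by (auto simp: bij_betw_def)
  let ?F = "pendant_map n g e"
  have "inj_on ?F {0..<2 * n}"
    using g e by (intro inj_on_pendant_map) (auto simp: bij_betw_def)
  moreover have "?F ` {0..<2 * n} = verts X"
    using image_pendant_map[of n g e] g verts_X by (simp add: bij_betw_def)
  ultimately have bij: "bij_betw ?F (verts (T (Suc k))) (verts X)"
    using verts_T_Suc[OF k] n_def by (simp add: bij_betw_def)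
  have cross: "{u, v + n} \<in> edges (T (Suc k)) \<longleftrightarrow> {?F u, ?F (v + n)} \<in> edges X"
    if "u < n" "v < n" for u v
    using that edge_T_Suc_cross[OF k n_def] pendant gB g by (auto simp: bij_betw_def inj_on_def)
  have "{u, v} \<in> edges (T (Suc k)) \<longleftrightarrow> {?F u, ?F v} \<in> edges X"
    if "u < 2 * n" "v < 2 * n" for u v
    using that
  proof (elim below_double_cases)
    assume "u < n" "v < n"
    then show ?thesis using edge_T_Suc_low[OF k n_def] g_edges edges_B gB by auto
  next
    fix b assume "u < n" "b < n" "v = b + n"
    then show ?thesis using cross by simp
  next
    fix a assume "a < n" "u = a + n" "v < n"
    then show ?thesis using cross[of v a] by (simp add: insert_commute)
  next
    fix a b assume "a < n" "u = a + n" "b < n" "v = b + n"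
    then show ?thesis using edge_T_Suc_high[OF k n_def] independent gB by simp
  qed
  then show ?thesis
    unfolding graph_iso_def using bij verts_T_Suc[OF k] n_def by auto
qed

section \<open>Paths and path trees\<close>

lemma adj_commute: "adj G u v \<longleftrightarrow> adj G v u"
  unfolding adj_def by (metis insert_commute)

lemma is_path_singleton [simp]: "is_path G [v] \<longleftrightarrow> v \<in> verts G"
  by (auto simp: is_path_def)

lemma is_path_snoc:
  assumes "p \<noteq> []"
  shows "is_path G (p @ [v]) \<longleftrightarrow> is_path G p \<and> v \<notin> set p \<and> v \<in> verts G \<and> adj G (last p) v"
proof -
  have "(\<forall>i. Suc i < length (p @ [v]) \<longrightarrow> adj G ((p @ [v]) ! i) ((p @ [v]) ! Suc i)) \<longleftrightarrow>
      (\<forall>i. Suc i < length p \<longrightarrow> adj G (p ! i) (p ! Suc i)) \<and> adj G (last p) v"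
  proof (intro iffI conjI allI impI)
    fix i assume steps: "\<forall>i. Suc i < length (p @ [v]) \<longrightarrow> adj G ((p @ [v]) ! i) ((p @ [v]) ! Suc i)"
    show "Suc i < length p \<Longrightarrow> adj G (p ! i) (p ! Suc i)"
      using steps[rule_format, of i] by (simp add: nth_append)
  next
    assume steps: "\<forall>i. Suc i < length (p @ [v]) \<longrightarrow> adj G ((p @ [v]) ! i) ((p @ [v]) ! Suc i)"
    show "adj G (last p) v"
      using steps[rule_format, of "length p - 1"] assms by (simp add: nth_append last_conv_nth)
  next
    fix i assume R: "(\<forall>i. Suc i < length p \<longrightarrow> adj G (p ! i) (p ! Suc i)) \<and> adj G (last p) v"
      and i: "Suc i < length (p @ [v])"
    show "adj G ((p @ [v]) ! i) ((p @ [v]) ! Suc i)"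
    proof (cases "Suc i < length p")
      case True
      then show ?thesis using R by (simp add: nth_append)
    next
      case False
      then have "i = length p - 1" "Suc i = length p" using i by auto
      then show ?thesis using R assms by (simp add: nth_append last_conv_nth)
    qed
  qed
  then show ?thesis using assms unfolding is_path_def by auto
qed

lemma is_path_prefix: "is_path G (p @ q) \<Longrightarrow> p \<noteq> [] \<Longrightarrow> is_path G p"
proof (induction q rule: rev_induct)
  case (snoc x q)
  then show ?case using is_path_snoc[of "p @ q" G x] by simp
qed simp

lemma is_path_transfer:
  assumes "is_path G p" "set p \<subseteq> verts G'"
    and "\<And>u v. u \<in> set p \<Longrightarrow> v \<in> set p \<Longrightarrow> adj G u v \<Longrightarrow> adj G' u v"
  shows "is_path G' p"
proof -
  have "adj G' (p ! i) (p ! Suc i)" if "Suc i < length p" for i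
    using assms(1) that by (intro assms(3)) (auto simp: is_path_def)
  then show ?thesis using assms(1,2) by (simp add: is_path_def)
qed

lemma mem_verts_path_tree: "p \<in> verts (path_tree G u) \<longleftrightarrow> is_path G p \<and> hd p = u"
  by (simp add: path_tree_def)

lemma mem_edges_path_tree:
  "e \<in> edges (path_tree G u) \<longleftrightarrow> (\<exists>p v. e = {p, p @ [v]} \<and> is_path G p \<and> hd p = u \<and> is_path G (p @ [v]))"
  by (simp add: path_tree_def)

lemma finite_verts_path_tree:
  assumes "finite (verts G)"
  shows "finite (verts (path_tree G u))"
proof (rule finite_subset)
  show "verts (path_tree G u) \<subseteq> {p. set p \<subseteq> verts G \<and> length p \<le> card (verts G)}"
    using assms by (auto simp: mem_verts_path_tree is_path_def card_mono simp flip: distinct_card)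
  show "finite {p. set p \<subseteq> verts G \<and> length p \<le> card (verts G)}"
    using assms by (rule finite_lists_length_le)
qed

lemma path_tree_singleton: "path_tree ({s}, {}) s = ({[s]}, {})"
proof -
  have path: "is_path ({s}, {}) p \<longleftrightarrow> p = [s]" for p
  proof
    assume "is_path ({s}, {}) p"
    then have "p \<noteq> []" "distinct p" "set p \<subseteq> {s}" by (auto simp: is_path_def)
    then obtain t where "p = s # t" "s \<notin> set t" "set t \<subseteq> {s}" by (cases p) auto
    then show "p = [s]" by (cases t) auto
  qed simp
  have "{p. is_path ({s}, {}) p \<and> hd p = s} = {[s]}"
    and "{{p, p @ [v]} | p v. is_path ({s}, {}) p \<and> hd p = s \<and> is_path ({s}, {}) (p @ [v])} = {}"
    by (simp_all only: path) auto
  then show ?thesis unfolding path_tree_def by simp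
qed

definition all_reachable :: "'a graph \<Rightarrow> 'a \<Rightarrow> bool" where
  "all_reachable G s \<longleftrightarrow> (\<forall>v\<in>verts G. \<exists>p. is_path G p \<and> hd p = s \<and> last p = v)"

section \<open>One step of the atom construction\<close>

locale atom_step =
  fixes H A :: "'a graph" and s :: 'a
  assumes wf: "wf_graph H" and seed: "s \<in> verts A" and sub: "verts A \<subseteq> verts H"
    and induced: "A = induced H (verts A)"
    and independent: "\<forall>x\<in>verts H - verts A. \<forall>y\<in>verts H - verts A. \<not> adj H x y"
    and unique_mate: "\<forall>x\<in>verts A. \<exists>!i. i \<in> verts H - verts A \<and> adj H x i"
    and covered: "\<forall>i\<in>verts H - verts A. \<exists>x\<in>verts A. adj H x i"
begin

abbreviation I :: "'a set" where "I \<equiv> verts H - verts A"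

definition mate :: "'a \<Rightarrow> 'a" where "mate x = (THE i. i \<in> I \<and> adj H x i)"

lemma mate: "x \<in> verts A \<Longrightarrow> mate x \<in> I \<and> adj H x (mate x)"
  unfolding mate_def using unique_mate by (metis (no_types, lifting) theI')

lemma mate_eq: "x \<in> verts A \<Longrightarrow> i \<in> I \<Longrightarrow> adj H x i \<Longrightarrow> mate x = i"
  unfolding mate_def using unique_mate by (metis (no_types, lifting) the1_equality)

lemma image_mate: "mate ` verts A = I"
  using mate mate_eq covered by blast

lemma finite_verts_H: "finite (verts H)"
  using wf by (simp add: wf_graph_def)

lemma finite_verts_A: "finite (verts A)"
  using finite_subset[OF sub finite_verts_H] .

lemma card_verts_H: "card (verts H) = card (verts A) + card I"
  using sub finite_verts_A finite_verts_H card_Un_disjoint[of "verts A" I]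
  by (simp add: Un_absorb1)

lemma card_I_le: "card I \<le> card (verts A)"
  using card_image_le[OF finite_verts_A, of mate] image_mate by simp

lemma inj_on_mate_iff_card: "inj_on mate (verts A) \<longleftrightarrow> card I = card (verts A)"
  using card_image eq_card_imp_inj_on[OF finite_verts_A] image_mate by metis

lemma edges_A: "edges A = {e \<in> edges H. e \<subseteq> verts A}"
  using induced by (metis induced_def snd_conv)

lemma edge_A_iff: "u \<in> verts A \<Longrightarrow> v \<in> verts A \<Longrightarrow> {u, v} \<in> edges A \<longleftrightarrow> {u, v} \<in> edges H"
  by (simp add: edges_A)

lemma adj_A_iff: "u \<in> verts A \<Longrightarrow> v \<in> verts A \<Longrightarrow> adj A u v \<longleftrightarrow> adj H u v"
  by (simp add: adj_def edge_A_iff)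

lemma is_path_H_if_A:
  assumes "is_path A p"
  shows "is_path H p"
proof -
  have "set p \<subseteq> verts A" using assms by (simp add: is_path_def)
  then show ?thesis
    using is_path_transfer[OF assms] sub adj_A_iff by blast
qed

lemma is_path_A_if_H: "is_path H p \<Longrightarrow> set p \<subseteq> verts A \<Longrightarrow> is_path A p"
  using is_path_transfer[of H p A] adj_A_iff by blast

lemma no_edge_I: "a \<in> I \<Longrightarrow> b \<in> I \<Longrightarrow> {a, b} \<notin> edges H"
  using independent wf unfolding wf_graph_def adj_def by (metis doubleton_eq_iff insert_absorb2)

lemma edge_mate_iff:
  assumes "inj_on mate (verts A)" "y \<in> verts A" "z \<in> verts A"
  shows "{y, mate z} \<in> edges H \<longleftrightarrow> z = y"
  using assms mate[of y] mate[of z] mate_eq[of y "mate z"] by (auto simp: adj_def inj_on_def)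

lemma graph_iso_T_Suc_H:
  assumes "k \<ge> 1" "inj_on mate (verts A)" "graph_iso (T k) A"
  shows "graph_iso (T (Suc k)) H"
proof (rule graph_iso_T_Suc[where B = A and e = mate])
  show "verts H = verts A \<union> mate ` verts A" using image_mate sub by auto
qed (use assms mate edge_A_iff edge_mate_iff no_edge_I in auto)

lemma all_reachable_H: "all_reachable A s \<Longrightarrow> all_reachable H s"
  unfolding all_reachable_def
proof
  fix v assume reach: "\<forall>v\<in>verts A. \<exists>p. is_path A p \<and> hd p = s \<and> last p = v" and v: "v \<in> verts H"
  show "\<exists>p. is_path H p \<and> hd p = s \<and> last p = v"
  proof (cases "v \<in> verts A")
    case True
    then show ?thesis using reach is_path_H_if_A by blast
  next
    case False
    then obtain x where x: "x \<in> verts A" "adj H x v" using covered v by blast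
    then obtain p where p: "is_path A p" "hd p = s" "last p = x" using reach by blast
    then have "p \<noteq> []" "set p \<subseteq> verts A" by (auto simp: is_path_def)
    then have "is_path H (p @ [v])"
      using is_path_snoc[of p H v] is_path_H_if_A[OF p(1)] p x v False by auto
    then show ?thesis using p \<open>p \<noteq> []\<close> by (intro exI[of _ "p @ [v]"]) simp
  qed
qed

abbreviation PA :: "'a list set" where "PA \<equiv> verts (path_tree A s)"
abbreviation PH :: "'a list set" where "PH \<equiv> verts (path_tree H s)"

definition ext_path :: "'a list \<Rightarrow> 'a list" where "ext_path p = p @ [mate (last p)]"

lemma mem_PA:
  "p \<in> PA \<Longrightarrow> is_path A p \<and> p \<noteq> [] \<and> set p \<subseteq> verts A \<and> last p \<in> verts A \<and> hd p = s"
  using last_in_set[of p] by (auto simp: mem_verts_path_tree is_path_def)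

lemma PA_subset_PH: "PA \<subseteq> PH"
  using is_path_H_if_A by (auto simp: mem_verts_path_tree)

lemma mate_last_PA: "p \<in> PA \<Longrightarrow> mate (last p) \<in> I"
  using mem_PA[of p] mate[of "last p"] by blast

lemma ext_path_mem_PH:
  assumes "p \<in> PA"
  shows "ext_path p \<in> PH"
proof -
  have p: "is_path A p" "p \<noteq> []" "set p \<subseteq> verts A" "hd p = s" "last p \<in> verts A"
    using mem_PA[OF assms] by auto
  then have "mate (last p) \<in> I" "adj H (last p) (mate (last p))" using mate[OF p(5)] by auto
  then have "is_path H (p @ [mate (last p)])"
    using is_path_snoc[OF p(2)] is_path_H_if_A[OF p(1)] p(3) by auto
  then show ?thesis using p by (simp add: ext_path_def mem_verts_path_tree)
qed

lemma inj_ext_path: "inj ext_path"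
  by (rule injI) (metis butlast_snoc ext_path_def)

lemma ext_path_append_notin_PA: "p \<in> PA \<Longrightarrow> ext_path p @ r \<notin> PA"
  using mem_PA[of "ext_path p @ r"] mate_last_PA[of p] by (auto simp: ext_path_def)

lemma ext_path_notin_PA: "p \<in> PA \<Longrightarrow> ext_path p \<notin> PA"
  using ext_path_append_notin_PA[of p "[]"] by simp

lemma card_PA_un_ext_path: "card (PA \<union> ext_path ` PA) = 2 * card PA"
proof -
  have "PA \<inter> ext_path ` PA = {}"
    using ext_path_notin_PA by auto
  then show ?thesis
    using finite_verts_path_tree[OF finite_verts_A] inj_ext_path
    by (simp add: card_Un_disjoint card_image inj_on_subset)
qed

lemma PA_un_ext_path_subset: "PA \<union> ext_path ` PA \<subseteq> PH"
  using PA_subset_PH ext_path_mem_PH by blast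

lemma finite_PH: "finite PH"
  using finite_verts_path_tree[OF finite_verts_H] .

lemma card_PH_ge: "2 * card PA \<le> card PH"
proof -
  have "card (PA \<union> ext_path ` PA) \<le> card PH"
    using finite_PH PA_un_ext_path_subset by (rule card_mono)
  then show ?thesis by (simp only: card_PA_un_ext_path)
qed

text \<open>If mate is injective, every vertex of I is a leaf of H, so a path from s that
  leaves A has to end right there.\<close>
lemma path_H_cases:
  assumes "inj_on mate (verts A)" "is_path H p" "hd p = s"
  shows "p \<in> PA \<or> p \<in> ext_path ` PA"
  using assms(2,3)
proof (induction p rule: rev_induct)
  case (snoc w q)
  show ?case
  proof (cases "q = []")
    case True
    then show ?thesis using snoc.prems seed by (simp add: mem_verts_path_tree)
  next
    case False
    have q: "is_path H q" "hd q = s"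
      and w: "w \<notin> set q" "w \<in> verts H" "adj H (last q) w"
      using snoc.prems is_path_snoc[OF False] False by simp_all
    from snoc.IH[OF q] show ?thesis
    proof
      assume "q \<in> PA"
      then have qA: "set q \<subseteq> verts A" "last q \<in> verts A" using mem_PA by auto
      show ?thesis
      proof (cases "w \<in> verts A")
        case True
        then have "is_path A (q @ [w])" using is_path_A_if_H snoc.prems(1) qA(1) by simp
        then show ?thesis using snoc.prems(2) by (simp add: mem_verts_path_tree)
      next
        case False
        then have "q @ [w] = ext_path q" using mate_eq[OF qA(2)] w by (simp add: ext_path_def)
        then show ?thesis using \<open>q \<in> PA\<close> by simp
      qed
    next
      assume "q \<in> ext_path ` PA"
      then obtain r where r: "q = ext_path r" "r \<in> PA" by blast
      have i: "mate (last r) \<in> I" and last_q: "last q = mate (last r)"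
        using mate_last_PA[OF r(2)] r(1) by (simp_all add: ext_path_def)
      have "w \<in> verts A" using independent i w(2,3) last_q by auto
      moreover have "adj H w (mate (last r))" using w(3) last_q adj_commute[of H w] by simp
      ultimately have "mate w = mate (last r)" using mate_eq i by blast
      then have "w = last r"
        using inj_onD[OF assms(1)] \<open>w \<in> verts A\<close> mem_PA[OF r(2)] by blast
      moreover have "last r \<in> set q" using r mem_PA[OF r(2)] by (simp add: ext_path_def)
      ultimately show ?thesis using w(1) by simp
    qed
  qed
qed (simp add: is_path_def)

lemma PH_eq_if_inj:
  assumes "inj_on mate (verts A)"
  shows "PH = PA \<union> ext_path ` PA"
proof
  show "PH \<subseteq> PA \<union> ext_path ` PA"
  proof
    fix p assume "p \<in> PH"
    then have "is_path H p" "hd p = s" by (simp_all add: mem_verts_path_tree)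
    then show "p \<in> PA \<union> ext_path ` PA" using path_H_cases[OF assms] by blast
  qed
qed (rule PA_un_ext_path_subset)

text \<open>Walk from s to whichever of x, y is reached first, then through the common mate
  to the other one.\<close>
lemma path_through_shared_mate:
  assumes reach: "all_reachable A s" and xy: "x \<in> verts A" "y \<in> verts A" "x \<noteq> y" "mate x = mate y"
  shows "\<exists>q\<in>PH. mate x \<in> set q \<and> last q \<in> verts A"
proof -
  obtain p where p: "is_path A p" "hd p = s" "last p = x"
    using reach xy unfolding all_reachable_def by blast
  obtain p' z w where p': "is_path A p'" "hd p' = s" "last p' = z" "w \<notin> set p'"
    and zw: "z \<in> {x, y}" "w \<in> {x, y}" "z \<noteq> w"
  proof (cases "y \<in> set p")
    case True
    then obtain p1 p2 where split: "p = p1 @ y # p2" by (meson split_list)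
    then have "x \<in> set p2" using p xy(3) by (cases p2 rule: rev_cases) auto
    then have "x \<notin> set (p1 @ [y])" using split p(1) by (auto simp: is_path_def)
    moreover have "is_path A (p1 @ [y])" using is_path_prefix[of A "p1 @ [y]" p2] split p(1) by simp
    moreover have "hd (p1 @ [y]) = s" using split p(2) by (cases p1) auto
    ultimately show ?thesis using that[of "p1 @ [y]" y x] xy(3) by auto
  next
    case False
    then show ?thesis using that[of p x y] p xy(3) by auto
  qed
  have "p' \<noteq> []" "set p' \<subseteq> verts A" using p'(1) by (auto simp: is_path_def)
  have "adj H x (mate x)" "adj H y (mate x)" using mate xy by metis+
  then have "u \<in> verts A \<and> adj H u (mate x) \<and> adj H (mate x) u" if "u \<in> {x, y}" for u
    using that xy(1,2) adj_commute[of H u] by auto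
  then have z: "z \<in> verts A" "adj H z (mate x)" and w: "w \<in> verts A" "adj H (mate x) w"
    using zw by blast+
  then have "is_path H (p' @ [mate x])"
    using is_path_snoc[OF \<open>p' \<noteq> []\<close>] is_path_H_if_A[OF p'(1)] \<open>set p' \<subseteq> verts A\<close> p'(3) mate[OF xy(1)]
    by auto
  then have "is_path H ((p' @ [mate x]) @ [w])"
    using is_path_snoc[of "p' @ [mate x]" H w] p'(4) w sub mate[OF xy(1)] by auto
  then show ?thesis
    using p'(2) \<open>p' \<noteq> []\<close> w by (intro bexI[of _ "(p' @ [mate x]) @ [w]"]) (auto simp: mem_verts_path_tree)
qed

lemma card_PH_gt_if_not_inj:
  assumes "all_reachable A s" "\<not> inj_on mate (verts A)"
  shows "2 * card PA < card PH"
proof -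
  obtain x y where "x \<in> verts A" "y \<in> verts A" "x \<noteq> y" "mate x = mate y"
    using assms(2) by (auto simp: inj_on_def)
  then obtain q where q: "q \<in> PH" "mate x \<in> set q" "last q \<in> verts A"
    using path_through_shared_mate[OF assms(1)] by blast
  have "q \<notin> PA" using q mem_PA mate[OF \<open>x \<in> verts A\<close>] by blast
  moreover have "q \<notin> ext_path ` PA" using q mate_last_PA by (auto simp: ext_path_def)
  ultimately have "PA \<union> ext_path ` PA \<subset> PH" using q(1) PA_un_ext_path_subset by blast
  then show ?thesis
    using psubset_card_mono[OF finite_PH] card_PA_un_ext_path by metis
qed

lemma edge_PH_iff:
  assumes "p \<in> PA" "q \<in> PA"
  shows "{p, q} \<in> edges (path_tree H s) \<longleftrightarrow> {p, q} \<in> edges (path_tree A s)"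
proof
  assume "{p, q} \<in> edges (path_tree H s)"
  then obtain r v where rv: "{p, q} = {r, r @ [v]}" "hd r = s" by (auto simp: mem_edges_path_tree)
  then have "r \<in> PA" "r @ [v] \<in> PA" using assms by (auto simp: doubleton_eq_iff)
  then show "{p, q} \<in> edges (path_tree A s)" using rv by (auto simp: mem_edges_path_tree mem_verts_path_tree)
next
  assume "{p, q} \<in> edges (path_tree A s)"
  then show "{p, q} \<in> edges (path_tree H s)"
    using is_path_H_if_A unfolding mem_edges_path_tree by blast
qed

lemma edge_PH_ext_path_iff:
  assumes "p \<in> PA" "q \<in> PA"
  shows "{p, ext_path q} \<in> edges (path_tree H s) \<longleftrightarrow> q = p"
proof
  assume "{p, ext_path q} \<in> edges (path_tree H s)"
  then obtain r v where "{p, ext_path q} = {r, r @ [v]}" by (auto simp: mem_edges_path_tree)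
  then consider "p = r" "ext_path q = r @ [v]" | "p = r @ [v]" "ext_path q = r"
    by (auto simp: doubleton_eq_iff)
  then show "q = p"
    by cases (use ext_path_append_notin_PA[OF assms(2)] assms(1) in \<open>auto simp: ext_path_def\<close>)
next
  assume "q = p"
  then show "{p, ext_path q} \<in> edges (path_tree H s)"
    using ext_path_mem_PH[OF assms(1)] mem_PA[OF assms(1)] is_path_H_if_A
    by (auto simp: mem_edges_path_tree mem_verts_path_tree ext_path_def)
qed

lemma no_edge_PH_ext_path:
  assumes "p \<in> PA" "q \<in> PA"
  shows "{ext_path p, ext_path q} \<notin> edges (path_tree H s)"
proof
  assume "{ext_path p, ext_path q} \<in> edges (path_tree H s)"
  then obtain r v where "{ext_path p, ext_path q} = {r, r @ [v]}" by (auto simp: mem_edges_path_tree)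
  then have "ext_path p @ [v] = ext_path q \<or> ext_path q @ [v] = ext_path p"
    by (auto simp: doubleton_eq_iff)
  then show False
    using ext_path_append_notin_PA assms by (auto simp: ext_path_def)
qed

lemma graph_iso_T_Suc_PH:
  assumes "k \<ge> 1" "inj_on mate (verts A)" "graph_iso (T k) (path_tree A s)"
  shows "graph_iso (T (Suc k)) (path_tree H s)"
proof (rule graph_iso_T_Suc[where B = "path_tree A s" and e = ext_path])
  show "PH = PA \<union> ext_path ` PA" using PH_eq_if_inj[OF assms(2)] .
  show "inj_on ext_path PA" using inj_ext_path by (rule inj_on_subset) simp
  show "\<forall>p\<in>PA. ext_path p \<notin> PA" using ext_path_notin_PA by blast
  show "\<forall>p\<in>PA. \<forall>q\<in>PA. {p, q} \<in> edges (path_tree H s) \<longleftrightarrow> {p, q} \<in> edges (path_tree A s)"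
    using edge_PH_iff by blast
  show "\<forall>p\<in>PA. \<forall>q\<in>PA. {p, ext_path q} \<in> edges (path_tree H s) \<longleftrightarrow> q = p"
    using edge_PH_ext_path_iff by blast
  show "\<forall>p\<in>PA. \<forall>q\<in>PA. {ext_path p, ext_path q} \<notin> edges (path_tree H s)"
    using no_edge_PH_ext_path by blast
qed (fact assms)+

lemma subgraph_iso_T_Suc_PH:
  assumes "k \<ge> 1" "subgraph_iso (T k) (path_tree A s)"
  shows "subgraph_iso (T (Suc k)) (path_tree H s)"
proof (rule subgraph_iso_T_Suc[where B = "path_tree A s" and e = ext_path])
  show "edges (path_tree A s) \<subseteq> edges (path_tree H s)"
    using is_path_H_if_A unfolding subset_iff mem_edges_path_tree by blast
  show "inj_on ext_path PA" using inj_ext_path by (rule inj_on_subset) simp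
  show "\<forall>p\<in>PA. ext_path p \<in> PH - PA"
    using ext_path_mem_PH ext_path_notin_PA by blast
  show "\<forall>p\<in>PA. {p, ext_path p} \<in> edges (path_tree H s)"
    using edge_PH_ext_path_iff by blast
qed (fact assms PA_subset_PH)+

end

lemma atom_ge_1: "atom k A s \<Longrightarrow> k \<ge> 1"
  by (induction rule: atom.induct) auto

lemma atom_seed_mem: "atom k A s \<Longrightarrow> s \<in> verts A"
  by (induction rule: atom.induct) auto

lemma atom_induct [consumes 1, case_names base step]:
  assumes "atom k A s"
    and base: "\<And>s. P 1 ({s}, {}) s"
    and step: "\<And>H k A s. atom k A s \<Longrightarrow> k \<ge> 1 \<Longrightarrow> atom_step H A s \<Longrightarrow> P k A s \<Longrightarrow> P (Suc k) H s"
  shows "P k A s"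
  using assms(1)
proof (induction rule: atom.induct)
  case (base s)
  then show ?case by (rule assms(2))
next
  case (step H k A s)
  have "atom_step H A s"
    using step.hyps atom_seed_mem[OF step.hyps(2)] by (simp add: atom_step_def)
  then show ?case using assms(3) step.hyps(2) step.IH atom_ge_1[OF step.hyps(2)] by blast
qed

lemma atom_all_reachable: "atom k A s \<Longrightarrow> all_reachable A s"
proof (induction rule: atom_induct)
  case (base s)
  then show ?case unfolding all_reachable_def by (auto intro!: exI[of _ "[s]"])
next
  case (step H k A s)
  then interpret atom_step H A s by simp
  show ?case using all_reachable_H step by simp
qed

lemma atom_card_verts_le: "atom k A s \<Longrightarrow> card (verts A) \<le> 2 ^ (k - 1)"
proof (induction rule: atom_induct)
  case (step H k A s)
  then interpret atom_step H A s by simp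
  show ?case using card_verts_H card_I_le step two_power_Suc_pred by simp
qed simp

lemma atom_card_path_tree_ge: "atom k A s \<Longrightarrow> 2 ^ (k - 1) \<le> card (verts (path_tree A s))"
proof (induction rule: atom_induct)
  case (base s)
  then show ?case by (simp add: path_tree_singleton)
next
  case (step H k A s)
  then interpret atom_step H A s by simp
  show ?case using card_PH_ge step two_power_Suc_pred by simp
qed

lemma atom_subgraph_iso_path_tree: "atom k A s \<Longrightarrow> subgraph_iso (T k) (path_tree A s)"
proof (induction rule: atom_induct)
  case (base s)
  then show ?case by (simp add: path_tree_singleton graph_iso_singleton subgraph_iso_if_graph_iso)
next
  case (step H k A s)
  then interpret atom_step H A s by simp
  show ?case using subgraph_iso_T_Suc_PH step by simp
qed

lemma atom_graph_iso_if_card_verts: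
  "atom k A s \<Longrightarrow> card (verts A) = 2 ^ (k - 1) \<Longrightarrow> graph_iso (T k) A \<and> graph_iso (T k) (path_tree A s)"
proof (induction rule: atom_induct)
  case (base s)
  then show ?case by (simp add: path_tree_singleton graph_iso_singleton)
next
  case (step H k A s)
  then interpret atom_step H A s by simp
  have "card (verts A) = 2 ^ (k - 1)" "card I = card (verts A)"
    using step card_verts_H card_I_le atom_card_verts_le[OF step(1)] two_power_Suc_pred by auto
  then show ?case
    using step inj_on_mate_iff_card graph_iso_T_Suc_H graph_iso_T_Suc_PH by simp
qed

lemma atom_card_verts_if_card_path_tree:
  "atom k A s \<Longrightarrow> card (verts (path_tree A s)) = 2 ^ (k - 1) \<Longrightarrow> card (verts A) = 2 ^ (k - 1)"
proof (induction rule: atom_induct)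
  case (base s)
  then show ?case by simp
next
  case (step H k A s)
  then interpret atom_step H A s by simp
  have PH: "card PH = 2 * 2 ^ (k - 1)" using step two_power_Suc_pred by simp
  have PA: "2 ^ (k - 1) \<le> card PA" using atom_card_path_tree_ge[OF step(1)] .
  have "inj_on mate (verts A)"
    using card_PH_gt_if_not_inj[OF atom_all_reachable[OF step(1)]] PH PA by linarith
  moreover have "card PA = 2 ^ (k - 1)" using card_PH_ge PH PA by linarith
  ultimately show ?case
    using step card_verts_H inj_on_mate_iff_card two_power_Suc_pred by simp
qed

theorem lemma1:
  fixes A :: "'a graph" and s :: 'a and k :: nat
  assumes "k \<ge> 1" and "atom k A s"
  shows "subgraph_iso (T k) (path_tree A s) \<and>
         (graph_iso (T k) (path_tree A s) \<longleftrightarrow> graph_iso A (T k))"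
proof -
  have "graph_iso (T k) (path_tree A s) \<longleftrightarrow> graph_iso A (T k)"
  proof
    assume "graph_iso (T k) (path_tree A s)"
    then have "card (verts (path_tree A s)) = 2 ^ (k - 1)"
      using graph_iso_card_verts card_verts_T[OF assms(1)] by metis
    then have "card (verts A) = 2 ^ (k - 1)"
      using atom_card_verts_if_card_path_tree[OF assms(2)] by simp
    then show "graph_iso A (T k)"
      using atom_graph_iso_if_card_verts[OF assms(2)] graph_iso_sym by blast
  next
    assume "graph_iso A (T k)"
    then have "card (verts A) = 2 ^ (k - 1)"
      using graph_iso_card_verts card_verts_T[OF assms(1)] by metis
    then show "graph_iso (T k) (path_tree A s)"
      using atom_graph_iso_if_card_verts[OF assms(2)] by blast
  qed
  then show ?thesis using atom_subgraph_iso_path_tree[OF assms(2)] by blast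
qed

end
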